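(* Consider the system \[ x_{k+1} = x_k - \rho y_k + \hat g(y_k,w_k),\qquad y_{k+1} = (1-\beta)y_k + \hat h(y_{k-1},w_{k-1})\bigl(J(x_k)-J(x_{k-1})\bigr) \] with the setup described in the context. Then for every $k\ge1$, \[ \mathbb{E}[\tilde x_{k+1}]=\mathbb{E}[\tilde x_k]-\rho\,\mathbb{E}[y_k],\qquad \mathbb{E}[y_{k+1}]=(1-\beta)\mathbb{E}[y_k]+\mu\gamma\,\mathbb{E}[\tilde x_k]. \]
   Context: Setup. Parameters: $\rho>0$, $\beta\in(0,2)$, $\varepsilon>0$, $\omega>0$. The random variables $w_i$, $i\in\mathbb{N}\cup\{0\}$, are i.i.d., each taking the value $-\omega$ or $\omega$ with probability $1/2$. The functions $h,g:\mathbb{R}\to\mathbb{R}$ are odd, satisfy $\mathrm{sign}(g(w))=\mathrm{sign}(h(w))$ for all $w$, and $g(w)=h(w)=0$ if and only if $w=0$. Define $\hat h(y,w):=\frac{h(w)}{|y|+\varepsilon}$ and $\hat g(y,w):=(|y|+\varepsilon)g(w)$. The objective is $J(x)=J^*+\frac{\mu}{2}(x-x^* )^2$ with $\mu>0$, $x^*,J^*\in\mathbb{R}$. The initial data $x_0,y_0$ and the initialization $y_1$ (the $y$-update being applied for $k\ge1$) are deterministic. Notation: $\tilde x_k:=x_k-x^*$, $\gamma:=\mathbb{E}[h(w_k)g(w_k)]$. *)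

theory Defs
  imports "HOL-Probability.Probability"
begin

definition hhat :: "real \<Rightarrow> (real \<Rightarrow> real) \<Rightarrow> real \<Rightarrow> real \<Rightarrow> real" where
  "hhat \<epsilon> h y v = h v / (\<bar>y\<bar> + \<epsilon>)"

definition ghat :: "real \<Rightarrow> (real \<Rightarrow> real) \<Rightarrow> real \<Rightarrow> real \<Rightarrow> real" where
  "ghat \<epsilon> g y v = (\<bar>y\<bar> + \<epsilon>) * g v"

fun traj :: "real \<Rightarrow> real \<Rightarrow> real \<Rightarrow> (real \<Rightarrow> real) \<Rightarrow> (real \<Rightarrow> real) \<Rightarrow> (real \<Rightarrow> real)
     \<Rightarrow> real \<Rightarrow> real \<Rightarrow> real \<Rightarrow> (nat \<Rightarrow> real) \<Rightarrow> nat \<Rightarrow> real \<times> real" where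
  "traj \<rho> \<beta> \<epsilon> h g J x0 y0 y1 W 0 = (x0, y0)"
| "traj \<rho> \<beta> \<epsilon> h g J x0 y0 y1 W (Suc 0) = (x0 - \<rho> * y0 + ghat \<epsilon> g y0 (W 0), y1)"
| "traj \<rho> \<beta> \<epsilon> h g J x0 y0 y1 W (Suc (Suc k)) =
     (let (xk, yk) = traj \<rho> \<beta> \<epsilon> h g J x0 y0 y1 W k;
          (xk1, yk1) = traj \<rho> \<beta> \<epsilon> h g J x0 y0 y1 W (Suc k)
      in (xk1 - \<rho> * yk1 + ghat \<epsilon> g yk1 (W (Suc k)),
          (1 - \<beta>) * yk1 + hhat \<epsilon> h yk (W k) * (J xk1 - J xk)))"

end

(* Since h and g are odd and w_k = +-omega, h (w_k) = h omega * sgn w_k and g (w_k) = g omega * sgn w_k.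
   The state (x_k, y_k) is a function of w_0, ..., w_(k-1) only, hence independent of sgn w_k, which
   has mean zero; so every term Phi (x_k, y_k) * sgn w_k has zero expectation. The x-update differs from
   x_k - rho y_k by such a term. Expanding the quadratic J in the y-update and using (sgn w_k)^2 = 1
   gives y_(k+2) = (1 - beta) y_(k+1) + mu h omega g omega (x_k - x* - rho y_k) + Phi (x_k, y_k) sgn w_k,
   and the x-identity turns the expectation of the middle term into mu gamma E[x_(k+1) - x*].
   Integrability is free: the state takes only finitely many values. *)

theory Submission
  imports Defs
begin

lemma fst_traj_Suc:
  "fst (traj \<rho> \<beta> \<epsilon> h g J x0 y0 y1 W (Suc n))
     = fst (traj \<rho> \<beta> \<epsilon> h g J x0 y0 y1 W n) - \<rho> * snd (traj \<rho> \<beta> \<epsilon> h g J x0 y0 y1 W n)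
       + ghat \<epsilon> g (snd (traj \<rho> \<beta> \<epsilon> h g J x0 y0 y1 W n)) (W n)"
  by (cases n) (simp_all add: Let_def case_prod_beta)

lemma snd_traj_Suc_Suc:
  "snd (traj \<rho> \<beta> \<epsilon> h g J x0 y0 y1 W (Suc (Suc n)))
     = (1 - \<beta>) * snd (traj \<rho> \<beta> \<epsilon> h g J x0 y0 y1 W (Suc n))
       + hhat \<epsilon> h (snd (traj \<rho> \<beta> \<epsilon> h g J x0 y0 y1 W n)) (W n)
         * (J (fst (traj \<rho> \<beta> \<epsilon> h g J x0 y0 y1 W (Suc n))) - J (fst (traj \<rho> \<beta> \<epsilon> h g J x0 y0 y1 W n)))"
  by (simp add: Let_def case_prod_beta)

lemma traj_cong_prefix:
  assumes "\<And>i. i < n \<Longrightarrow> W i = V i"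
  shows "traj \<rho> \<beta> \<epsilon> h g J x0 y0 y1 W n = traj \<rho> \<beta> \<epsilon> h g J x0 y0 y1 V n"
  using assms by (induction n rule: induct_nat_012) (simp_all add: Let_def)

lemma traj_noise_cong:
  assumes "\<And>i. h (W i) = h' (W i)" and "\<And>i. g (W i) = g' (W i)"
  shows "traj \<rho> \<beta> \<epsilon> h g J x0 y0 y1 W n = traj \<rho> \<beta> \<epsilon> h' g' J x0 y0 y1 W n"
  by (induction n rule: induct_nat_012) (simp_all add: Let_def ghat_def hhat_def assms)

lemma measurable_traj:
  assumes [measurable]: "h \<in> borel_measurable borel" "g \<in> borel_measurable borel" "J \<in> borel_measurable borel"
    and "\<And>i. i < n \<Longrightarrow> W i \<in> borel_measurable N"
  shows "(\<lambda>s. traj \<rho> \<beta> \<epsilon> h g J x0 y0 y1 (\<lambda>i. W i s) n) \<in> borel_measurable N"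
  using assms(4) unfolding borel_prod[symmetric]
proof (induction n rule: induct_nat_012)
  case 0
  then show ?case by simp
next
  case 1
  then have [measurable]: "W 0 \<in> borel_measurable N" by simp
  show ?case by (simp add: ghat_def)
next
  case (ge2 n)
  then have [measurable]: "W n \<in> borel_measurable N" "W (Suc n) \<in> borel_measurable N"
    "(\<lambda>s. traj \<rho> \<beta> \<epsilon> h g J x0 y0 y1 (\<lambda>i. W i s) n) \<in> measurable N (borel \<Otimes>\<^sub>M borel)"
    "(\<lambda>s. traj \<rho> \<beta> \<epsilon> h g J x0 y0 y1 (\<lambda>i. W i s) (Suc n)) \<in> measurable N (borel \<Otimes>\<^sub>M borel)"
    by simp_all
  show ?case by (simp add: Let_def case_prod_beta ghat_def hhat_def)
qed

lemma traj_restrict: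
  "traj \<rho> \<beta> \<epsilon> h g J x0 y0 y1 (restrict W {..<n}) n = traj \<rho> \<beta> \<epsilon> h g J x0 y0 y1 W n"
  by (rule traj_cong_prefix) simp

lemma measurable_traj_prefix [measurable]:
  assumes "h \<in> borel_measurable borel" "g \<in> borel_measurable borel" "J \<in> borel_measurable borel"
  shows "(\<lambda>V. traj \<rho> \<beta> \<epsilon> h g J x0 y0 y1 V n) \<in> borel_measurable (\<Pi>\<^sub>M i\<in>{..<n}. borel)"
  using measurable_traj[OF assms, where W = "\<lambda>i V. V i"] by simp

lemma sign_quadratic_increment:
  fixes c r :: real
  assumes "c\<^sup>2 = 1" and "r \<noteq> 0"
  shows "a * c / r * (\<mu> / 2 * ((e - \<rho> * y + r * (b * c))\<^sup>2 - e\<^sup>2))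
       = \<mu> * a * b * (e - \<rho> * y) + \<mu> / 2 * a * (r * b\<^sup>2 - \<rho> * y * (2 * e - \<rho> * y) / r) * c"
proof -
  have "c = 1 \<or> c = -1"
    using assms(1) by (simp add: power2_eq_1_iff)
  then show ?thesis
    using assms(2) by (elim disjE) (simp_all add: field_simps power2_eq_square)
qed

locale two_point_noise = prob_space +
  fixes w :: "nat \<Rightarrow> 'a \<Rightarrow> real" and \<omega> :: real
  assumes indep_noise: "indep_vars (\<lambda>_. borel) w UNIV"
    and noise_values: "\<And>i s. s \<in> space M \<Longrightarrow> w i s = - \<omega> \<or> w i s = \<omega>"
    and noise_symmetric: "\<And>i. prob {s \<in> space M. w i s = \<omega>} = prob {s \<in> space M. w i s = - \<omega>}"
    and noise_nonzero: "\<omega> \<noteq> 0"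
begin

lemma measurable_noise [measurable]: "w i \<in> borel_measurable M"
  using indep_noise unfolding indep_vars_def by auto

lemma expectation_sgn_noise: "expectation (\<lambda>s. sgn (w i s)) = 0"
proof -
  define A where "A = {s \<in> space M. w i s = \<omega>}"
  define B where "B = {s \<in> space M. w i s = - \<omega>}"
  have [measurable]: "A \<in> events" "B \<in> events"
    unfolding A_def B_def by measurable
  have "expectation (\<lambda>s. sgn (w i s)) = expectation (\<lambda>s. sgn \<omega> * (indicator A s - indicator B s))"
    by (rule Bochner_Integration.integral_cong) (use noise_values in \<open>auto simp: A_def B_def indicator_def\<close>)
  also have "\<dots> = sgn \<omega> * (prob A - prob B)"
    by (simp add: Bochner_Integration.integral_diff emeasure_finite less_top[symmetric])
  finally show ?thesis
    using noise_symmetric[of i] by (simp add: A_def B_def)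
qed

lemma integrable_noise_prefix_fun:
  fixes F :: "(nat \<Rightarrow> real) \<Rightarrow> real"
  assumes [measurable]: "F \<in> borel_measurable (\<Pi>\<^sub>M i\<in>{..<m}. borel)"
  shows "integrable M (\<lambda>s. F (restrict (\<lambda>i. w i s) {..<m}))"
proof -
  let ?prefixes = "{..<m} \<rightarrow>\<^sub>E {- \<omega>, \<omega>}"
  have "finite (F ` ?prefixes)"
    by (simp add: finite_PiE)
  then obtain B where B: "\<And>v. v \<in> ?prefixes \<Longrightarrow> \<bar>F v\<bar> \<le> B"
    using finite_imp_bounded bounded_real by (metis image_eqI)
  have "\<bar>F (restrict (\<lambda>i. w i s) {..<m})\<bar> \<le> B" if "s \<in> space M" for s
    by (rule B) (use noise_values[OF that] in \<open>auto simp: restrict_PiE_iff\<close>)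
  then show ?thesis
    by (intro integrable_const_bound[where B = B] AE_I2) auto
qed

lemma
  fixes F :: "(nat \<Rightarrow> real) \<Rightarrow> real"
  assumes [measurable]: "F \<in> borel_measurable (\<Pi>\<^sub>M i\<in>{..<m}. borel)"
  shows integrable_noise_prefix_fun_mult_sgn:
      "integrable M (\<lambda>s. F (restrict (\<lambda>i. w i s) {..<m}) * sgn (w m s))"
    and expectation_noise_prefix_fun_mult_sgn:
      "expectation (\<lambda>s. F (restrict (\<lambda>i. w i s) {..<m}) * sgn (w m s)) = 0"
proof -
  have "indep_var (\<Pi>\<^sub>M i\<in>{..<m}. borel) (\<lambda>s. restrict (\<lambda>i. w i s) {..<m})
                  (\<Pi>\<^sub>M i\<in>{m}. borel) (\<lambda>s. restrict (\<lambda>i. w i s) {m})"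
    by (rule indep_var_restrict[OF indep_noise]) auto
  then have "indep_var borel (F \<circ> (\<lambda>s. restrict (\<lambda>i. w i s) {..<m}))
                  borel ((\<lambda>v. sgn (v m)) \<circ> (\<lambda>s. restrict (\<lambda>i. w i s) {m}))"
    by (rule indep_var_compose) simp_all
  then have indep: "indep_var borel (\<lambda>s. F (restrict (\<lambda>i. w i s) {..<m})) borel (\<lambda>s. sgn (w m s))"
    by (simp add: comp_def)
  have "integrable M (\<lambda>s. sgn (w m s))"
    by (intro integrable_const_bound[where B = 1]) (auto simp: abs_sgn_eq)
  note integrable = integrable_noise_prefix_fun[OF assms] this
  show "integrable M (\<lambda>s. F (restrict (\<lambda>i. w i s) {..<m}) * sgn (w m s))"
    by (rule indep_var_integrable[OF indep integrable])
  show "expectation (\<lambda>s. F (restrict (\<lambda>i. w i s) {..<m}) * sgn (w m s)) = 0"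
    by (simp add: indep_var_lebesgue_integral[OF indep integrable] expectation_sgn_noise)
qed

context
  fixes \<rho> \<beta> \<epsilon> a b :: real and J :: "real \<Rightarrow> real" and x0 y0 y1 :: real
begin

text \<open>The sign model: on the values \<open>\<plusminus>\<omega>\<close> it agrees with odd \<open>h\<close>, \<open>g\<close>, but unlike them it is
  Borel measurable.\<close>

abbreviation state :: "nat \<Rightarrow> 'a \<Rightarrow> real \<times> real" where
  "state n s \<equiv> traj \<rho> \<beta> \<epsilon> (\<lambda>v. a * sgn v) (\<lambda>v. b * sgn v) J x0 y0 y1 (\<lambda>i. w i s) n"

lemma integrable_state_fun:
  fixes \<Phi> :: "real \<times> real \<Rightarrow> real"
  assumes [measurable]: "J \<in> borel_measurable borel" "\<Phi> \<in> borel_measurable borel"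
  shows "integrable M (\<lambda>s. \<Phi> (state n s))"
  using integrable_noise_prefix_fun[of "\<lambda>V. \<Phi> (traj \<rho> \<beta> \<epsilon> (\<lambda>v. a * sgn v) (\<lambda>v. b * sgn v) J x0 y0 y1 V n)" n]
  by (simp add: traj_restrict)

lemma integrable_state_components:
  assumes "J \<in> borel_measurable borel"
  shows "integrable M (\<lambda>s. fst (state n s))" and "integrable M (\<lambda>s. snd (state n s))"
  by (rule integrable_state_fun[OF assms], simp add: borel_prod[symmetric])+

lemma
  fixes \<Phi> :: "real \<times> real \<Rightarrow> real"
  assumes [measurable]: "J \<in> borel_measurable borel" "\<Phi> \<in> borel_measurable borel"
  shows integrable_state_fun_mult_sgn: "integrable M (\<lambda>s. \<Phi> (state n s) * sgn (w n s))"
    and expectation_state_fun_mult_sgn: "expectation (\<lambda>s. \<Phi> (state n s) * sgn (w n s)) = 0"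
  using integrable_noise_prefix_fun_mult_sgn[of "\<lambda>V. \<Phi> (traj \<rho> \<beta> \<epsilon> (\<lambda>v. a * sgn v) (\<lambda>v. b * sgn v) J x0 y0 y1 V n)" n]
    expectation_noise_prefix_fun_mult_sgn[of "\<lambda>V. \<Phi> (traj \<rho> \<beta> \<epsilon> (\<lambda>v. a * sgn v) (\<lambda>v. b * sgn v) J x0 y0 y1 V n)" n]
  by (simp_all add: traj_restrict)

lemma expectation_fst_state_Suc:
  assumes [measurable]: "J \<in> borel_measurable borel"
  shows "expectation (\<lambda>s. fst (state (Suc n) s) - c)
       = expectation (\<lambda>s. fst (state n s) - c) - \<rho> * expectation (\<lambda>s. snd (state n s))"
proof -
  note integrable_state_components[OF assms, simp]
  define \<Phi> where "\<Phi> p = b * (\<bar>snd p\<bar> + \<epsilon>)" for p :: "real \<times> real"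
  have [measurable]: "\<Phi> \<in> borel_measurable borel"
    unfolding \<Phi>_def[abs_def] borel_prod[symmetric] by measurable
  have "fst (state (Suc n) s) - c
      = (fst (state n s) - c - \<rho> * snd (state n s)) + \<Phi> (state n s) * sgn (w n s)" for s
    by (simp add: fst_traj_Suc ghat_def \<Phi>_def)
  then have "expectation (\<lambda>s. fst (state (Suc n) s) - c)
      = expectation (\<lambda>s. fst (state n s) - c - \<rho> * snd (state n s))
        + expectation (\<lambda>s. \<Phi> (state n s) * sgn (w n s))"
    by (simp add: integrable_state_fun_mult_sgn)
  then show ?thesis
    by (simp add: expectation_state_fun_mult_sgn)
qed

lemma expectation_snd_state_Suc_Suc:
  assumes "\<epsilon> > 0" and J: "J = (\<lambda>x. Jstar + \<mu> / 2 * (x - xstar)\<^sup>2)"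
  shows "expectation (\<lambda>s. snd (state (Suc (Suc n)) s))
       = (1 - \<beta>) * expectation (\<lambda>s. snd (state (Suc n) s))
         + \<mu> * a * b * expectation (\<lambda>s. fst (state (Suc n) s) - xstar)"
proof -
  have J_borel [measurable]: "J \<in> borel_measurable borel"
    unfolding J by measurable
  note integrable_state_components[OF J_borel, simp]
  define Z where "Z p = \<mu> / 2 * a * ((\<bar>snd p\<bar> + \<epsilon>) * b\<^sup>2
      - \<rho> * snd p * (2 * (fst p - xstar) - \<rho> * snd p) / (\<bar>snd p\<bar> + \<epsilon>))" for p :: "real \<times> real"
  have [measurable]: "Z \<in> borel_measurable borel"
    unfolding Z_def[abs_def] borel_prod[symmetric] by measurable
  have increment: "snd (state (Suc (Suc n)) s)
      = (1 - \<beta>) * snd (state (Suc n) s) + \<mu> * a * b * (fst (state n s) - xstar - \<rho> * snd (state n s))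
        + Z (state n s) * sgn (w n s)" if "s \<in> space M" for s
  proof -
    let ?x = "fst (state n s)" and ?y = "snd (state n s)" and ?c = "sgn (w n s)"
    have "?c\<^sup>2 = 1"
      using noise_values[OF that, of n] noise_nonzero by (auto simp: sgn_if)
    have "J (fst (state (Suc n) s)) - J ?x
        = \<mu> / 2 * ((?x - xstar - \<rho> * ?y + (\<bar>?y\<bar> + \<epsilon>) * (b * ?c))\<^sup>2 - (?x - xstar)\<^sup>2)"
      by (simp add: J fst_traj_Suc ghat_def algebra_simps)
    then have "snd (state (Suc (Suc n)) s) = (1 - \<beta>) * snd (state (Suc n) s)
        + a * ?c / (\<bar>?y\<bar> + \<epsilon>) * (\<mu> / 2 * ((?x - xstar - \<rho> * ?y + (\<bar>?y\<bar> + \<epsilon>) * (b * ?c))\<^sup>2 - (?x - xstar)\<^sup>2))"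
      by (simp only: snd_traj_Suc_Suc hhat_def)
    also have "\<dots> = (1 - \<beta>) * snd (state (Suc n) s)
        + \<mu> * a * b * (?x - xstar - \<rho> * ?y) + Z (state n s) * ?c"
      using sign_quadratic_increment[OF \<open>?c\<^sup>2 = 1\<close>, of "\<bar>?y\<bar> + \<epsilon>" a \<mu> "?x - xstar" \<rho> ?y b] \<open>\<epsilon> > 0\<close>
      by (simp add: Z_def)
    finally show ?thesis .
  qed
  have "expectation (\<lambda>s. snd (state (Suc (Suc n)) s))
      = expectation (\<lambda>s. (1 - \<beta>) * snd (state (Suc n) s)
          + \<mu> * a * b * (fst (state n s) - xstar - \<rho> * snd (state n s)) + Z (state n s) * sgn (w n s))"
    by (intro Bochner_Integration.integral_cong refl increment)
  also have "\<dots> = (1 - \<beta>) * expectation (\<lambda>s. snd (state (Suc n) s))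
      + \<mu> * a * b * (expectation (\<lambda>s. fst (state n s) - xstar) - \<rho> * expectation (\<lambda>s. snd (state n s)))"
    by (simp add: integrable_state_fun_mult_sgn expectation_state_fun_mult_sgn)
  also have "\<dots> = (1 - \<beta>) * expectation (\<lambda>s. snd (state (Suc n) s))
      + \<mu> * a * b * expectation (\<lambda>s. fst (state (Suc n) s) - xstar)"
    by (simp only: expectation_fst_state_Suc[OF J_borel])
  finally show ?thesis .
qed

end

end

theorem lemma5:
  fixes M :: "'a measure" and w :: "nat \<Rightarrow> 'a \<Rightarrow> real"
    and \<rho> \<beta> \<epsilon> \<omega> \<mu> xstar Jstar x0 y0 y1 :: real
    and h g J :: "real \<Rightarrow> real" and k :: nat
  assumes "prob_space M"
    and "\<rho> > 0" and "0 < \<beta>" and "\<beta> < 2" and "\<epsilon> > 0" and "\<omega> > 0"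
    and "prob_space.indep_vars M (\<lambda>_. borel) w UNIV"
    and "\<And>i s. s \<in> space M \<Longrightarrow> w i s = - \<omega> \<or> w i s = \<omega>"
    and "\<And>i. measure M {s \<in> space M. w i s = \<omega>} = 1/2"
    and "\<And>i. measure M {s \<in> space M. w i s = - \<omega>} = 1/2"
    and "\<And>v. h (- v) = - h v" and "\<And>v. g (- v) = - g v"
    and "\<And>v. sgn (g v) = sgn (h v)"
    and "\<And>v. g v = 0 \<longleftrightarrow> v = 0" and "\<And>v. h v = 0 \<longleftrightarrow> v = 0"
    and "\<mu> > 0"
    and "J = (\<lambda>x. Jstar + \<mu> / 2 * (x - xstar)\<^sup>2)"
    and "k \<ge> 1"
  shows "prob_space.expectation M
           (\<lambda>s. fst (traj \<rho> \<beta> \<epsilon> h g J x0 y0 y1 (\<lambda>i. w i s) (Suc k)) - xstar)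
         = prob_space.expectation M
             (\<lambda>s. fst (traj \<rho> \<beta> \<epsilon> h g J x0 y0 y1 (\<lambda>i. w i s) k) - xstar)
           - \<rho> * prob_space.expectation M
             (\<lambda>s. snd (traj \<rho> \<beta> \<epsilon> h g J x0 y0 y1 (\<lambda>i. w i s) k))
       \<and> prob_space.expectation M
           (\<lambda>s. snd (traj \<rho> \<beta> \<epsilon> h g J x0 y0 y1 (\<lambda>i. w i s) (Suc k)))
         = (1 - \<beta>) * prob_space.expectation M
             (\<lambda>s. snd (traj \<rho> \<beta> \<epsilon> h g J x0 y0 y1 (\<lambda>i. w i s) k))
           + \<mu> * prob_space.expectation M (\<lambda>s. h (w k s) * g (w k s))
             * prob_space.expectation M
               (\<lambda>s. fst (traj \<rho> \<beta> \<epsilon> h g J x0 y0 y1 (\<lambda>i. w i s) k) - xstar)"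
proof -
  interpret two_point_noise M w \<omega>
    using assms(1,6-8)
    by (intro two_point_noise.intro two_point_noise_axioms.intro) (simp_all add: assms(9,10))
  have sign_form: "h v = h \<omega> * sgn v" "g v = g \<omega> * sgn v" if "v = - \<omega> \<or> v = \<omega>" for v
    using that \<open>\<omega> > 0\<close> assms(11,12) by auto
  have sign_model: "traj \<rho> \<beta> \<epsilon> h g J x0 y0 y1 (\<lambda>i. w i s) n
      = traj \<rho> \<beta> \<epsilon> (\<lambda>v. h \<omega> * sgn v) (\<lambda>v. g \<omega> * sgn v) J x0 y0 y1 (\<lambda>i. w i s) n"
    if "s \<in> space M" for s n
    by (rule traj_noise_cong; rule sign_form[OF noise_values[OF that]])
  have E: "expectation (\<lambda>s. f (traj \<rho> \<beta> \<epsilon> h g J x0 y0 y1 (\<lambda>i. w i s) n))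
      = expectation (\<lambda>s. f (state \<rho> \<beta> \<epsilon> (h \<omega>) (g \<omega>) J x0 y0 y1 n s))"
    for f :: "real \<times> real \<Rightarrow> real" and n
    by (intro Bochner_Integration.integral_cong refl arg_cong[where f = f] sign_model)
  have \<gamma>: "expectation (\<lambda>s. h (w i s) * g (w i s)) = h \<omega> * g \<omega>" for i
  proof -
    have "h (w i s) * g (w i s) = h \<omega> * g \<omega>" if "s \<in> space M" for s
      using noise_values[OF that, of i] assms(11,12) by auto
    then have "expectation (\<lambda>s. h (w i s) * g (w i s)) = expectation (\<lambda>_. h \<omega> * g \<omega>)"
      by (intro Bochner_Integration.integral_cong refl)
    then show ?thesis
      by (simp add: prob_space)
  qed
  have J_borel: "J \<in> borel_measurable borel"
    unfolding assms(17) by measurable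
  obtain m where "k = Suc m"
    using \<open>k \<ge> 1\<close> by (cases k) auto
  show ?thesis
    unfolding E[of "\<lambda>p. fst p - xstar"] E[of snd] \<gamma> \<open>k = Suc m\<close>
    by (intro conjI expectation_fst_state_Suc[OF J_borel])
      (subst expectation_snd_state_Suc_Suc[OF \<open>\<epsilon> > 0\<close> assms(17)], simp add: mult.assoc)
qed

end
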